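(* Let $G=(V,E)$ be a finite unweighted undirected graph with no isolated nodes, let $g\ge 2$ be an integer and $Q\ge 1$. Suppose $S_1,\dots,S_Q\subset V$ are pairwise disjoint $g$-dangling sets, and let $S_0=V\setminus\bigcup_{l=1}^Q S_l$ satisfy $\mathrm{vol}(S_0,G)\ge 4g^2$. Then the normalized Laplacian $L=I-D^{-1/2}AD^{-1/2}$ of $G$ has at least $Q/2$ eigenvalues (counted with multiplicity) that are strictly smaller than $(g-1)^{-1}$.
   Context: $A$ is the adjacency matrix of $G$ ($A_{ij}=1$ if $\{i,j\}\in E$, else $0$), $d_i=\sum_j A_{ij}$ is the degree of node $i$, $D=\mathrm{diag}(d_1,\dots,d_N)$, and for $S\subset V$, $\mathrm{vol}(S,G)=\sum_{i\in S}d_i$. A subset $S\subset V$ is called $g$-dangling if: (i) $|S|=g$; (ii) the node-induced subgraph on $S$ has exactly $g-1$ edges and contains no cycle (i.e., it is a tree); (iii) there is exactly one edge of $G$ with one endpoint in $S$ and the other in $V\setminus S$. *)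

theory Defs
  imports "Jordan_Normal_Form.Char_Poly"
begin

definition simple_graph :: "nat \<Rightarrow> (nat \<Rightarrow> nat \<Rightarrow> bool) \<Rightarrow> bool" where
  "simple_graph n E \<longleftrightarrow> (\<forall>i j. E i j \<longrightarrow> i < n \<and> j < n) \<and> (\<forall>i j. E i j \<longrightarrow> E j i) \<and> (\<forall>i. \<not> E i i)"

definition adj_matrix :: "nat \<Rightarrow> (nat \<Rightarrow> nat \<Rightarrow> bool) \<Rightarrow> real mat" where
  "adj_matrix n E = mat n n (\<lambda>(i,j). if E i j then 1 else 0)"

definition degree :: "nat \<Rightarrow> (nat \<Rightarrow> nat \<Rightarrow> bool) \<Rightarrow> nat \<Rightarrow> real" where
  "degree n E i = (\<Sum>j<n. adj_matrix n E $$ (i,j))"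

definition vol :: "nat \<Rightarrow> (nat \<Rightarrow> nat \<Rightarrow> bool) \<Rightarrow> nat set \<Rightarrow> real" where
  "vol n E S = (\<Sum>i\<in>S. degree n E i)"

definition deg_inv_sqrt :: "nat \<Rightarrow> (nat \<Rightarrow> nat \<Rightarrow> bool) \<Rightarrow> real mat" where
  "deg_inv_sqrt n E = mat n n (\<lambda>(i,j). if i = j then 1 / sqrt (degree n E i) else 0)"

definition norm_laplacian :: "nat \<Rightarrow> (nat \<Rightarrow> nat \<Rightarrow> bool) \<Rightarrow> real mat" where
  "norm_laplacian n E = 1\<^sub>m n - deg_inv_sqrt n E * adj_matrix n E * deg_inv_sqrt n E"

definition induced_edges :: "(nat \<Rightarrow> nat \<Rightarrow> bool) \<Rightarrow> nat set \<Rightarrow> nat set set" where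
  "induced_edges E S = {{i, j} | i j. i \<in> S \<and> j \<in> S \<and> E i j}"

definition boundary_edges :: "nat \<Rightarrow> (nat \<Rightarrow> nat \<Rightarrow> bool) \<Rightarrow> nat set \<Rightarrow> nat set set" where
  "boundary_edges n E S = {{i, j} | i j. i \<in> S \<and> j \<in> {..<n} - S \<and> E i j}"

definition has_cycle_in :: "(nat \<Rightarrow> nat \<Rightarrow> bool) \<Rightarrow> nat set \<Rightarrow> bool" where
  "has_cycle_in E S \<longleftrightarrow> (\<exists>vs. distinct vs \<and> length vs \<ge> 3 \<and> set vs \<subseteq> S \<and>
      (\<forall>k < length vs. E (vs ! k) (vs ! ((k + 1) mod length vs))))"

definition dangling :: "nat \<Rightarrow> (nat \<Rightarrow> nat \<Rightarrow> bool) \<Rightarrow> nat \<Rightarrow> nat set \<Rightarrow> bool" where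
  "dangling n E g S \<longleftrightarrow> S \<subseteq> {..<n} \<and> card S = g \<and>
     card (induced_edges E S) = g - 1 \<and> \<not> has_cycle_in E S \<and>
     card (boundary_edges n E S) = 1"

end

theory Submission
  imports Defs "Jordan_Normal_Form.Spectral_Radius" "HOL-Library.Disjoint_Sets"
begin

text \<open>Take as test vectors \<open>D\<^bsup>1/2\<^esup>\<close> times the indicator functions of the dangling sets
  \<open>S\<^sub>1, \<dots>, S\<^sub>Q\<close>. On their span, a vector is \<open>D\<^bsup>1/2\<^esup> f\<close> with \<open>f\<close> constant \<open>a\<^sub>l\<close> on \<open>S\<^sub>l\<close> and zero
  elsewhere, so the Rayleigh quotient of \<open>L\<close> is a ratio of sums over edges and vertices.
  Only the single boundary edge of each \<open>S\<^sub>l\<close> contributes to the numerator, which is therefore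
  at most \<open>2 \<Sum> a\<^sub>l\<^sup>2\<close>, while a tree on \<open>g\<close> vertices with one outgoing edge has volume
  \<open>2g - 1\<close>, bounding the denominator below by \<open>(2g - 1) \<Sum> a\<^sub>l\<^sup>2\<close>. As \<open>2/(2g - 1) < 1/(g - 1)\<close>,
  the min-max principle yields \<open>Q\<close> (not merely \<open>Q/2\<close>) eigenvalues below \<open>1/(g - 1)\<close>.\<close>

section \<open>Linear systems and linear factors\<close>

lemma homogeneous_system_back_substitution:
  fixes w :: "'i \<Rightarrow> 'j \<Rightarrow> 'a::field"
  assumes J: "finite J" "l0 \<notin> J" and pivot: "w i0 l0 \<noteq> 0"
    and reduced: "\<forall>i\<in>I - {i0}. (\<Sum>l\<in>J. (w i l - w i l0 / w i0 l0 * w i0 l) * a l) = 0"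
  shows "\<forall>i\<in>I. (\<Sum>l\<in>insert l0 J. w i l * (a(l0 := - (\<Sum>l\<in>J. w i0 l * a l) / w i0 l0)) l) = 0"
proof
  fix i assume "i \<in> I"
  define s where "s = (\<Sum>l\<in>J. w i0 l * a l)"
  have "(\<Sum>l\<in>J. w i l * (a(l0 := - s / w i0 l0)) l) = (\<Sum>l\<in>J. w i l * a l)"
    using J by (intro sum.cong) auto
  then have "(\<Sum>l\<in>insert l0 J. w i l * (a(l0 := - s / w i0 l0)) l)
      = (\<Sum>l\<in>J. (w i l - w i l0 / w i0 l0 * w i0 l) * a l)"
    using J by (simp add: algebra_simps sum_subtractf sum_distrib_left sum_divide_distrib s_def)
  also have "\<dots> = 0"
    using reduced \<open>i \<in> I\<close> pivot by (cases "i = i0") (simp_all add: algebra_simps sum_subtractf)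
  finally show "(\<Sum>l\<in>insert l0 J. w i l * (a(l0 := - (\<Sum>l\<in>J. w i0 l * a l) / w i0 l0)) l) = 0"
    by (simp add: s_def)
qed

lemma homogeneous_system_nontrivial_solution:
  fixes w :: "'i \<Rightarrow> 'j \<Rightarrow> 'a::field"
  assumes "finite J" and "finite I" and "card I < card J"
  shows "\<exists>a. (\<exists>l\<in>J. a l \<noteq> 0) \<and> (\<forall>i\<in>I. (\<Sum>l\<in>J. w i l * a l) = 0)"
  using assms
proof (induction J arbitrary: I w rule: finite_induct)
  case empty
  then show ?case by simp
next
  case (insert l0 J)
  show ?case
  proof (cases "\<forall>i\<in>I. w i l0 = 0")
    case True
    have "(\<Sum>l\<in>insert l0 J. w i l * (if l = l0 then 1 else 0)) = 0" if "i \<in> I" for i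
      using insert.hyps True that by (simp add: sum.neutral)
    then show ?thesis
      by (intro exI[of _ "\<lambda>l. if l = l0 then 1 else 0"]) auto
  next
    case False
    then obtain i0 where i0: "i0 \<in> I" "w i0 l0 \<noteq> 0" by auto
    have "card I > 0"
      using insert.prems(1) i0(1) by (auto simp: card_gt_0_iff)
    with insert.prems insert.hyps i0(1) have "card (I - {i0}) < card J"
      by (simp add: card_Diff_singleton)
    then obtain a where a: "\<exists>l\<in>J. a l \<noteq> 0"
      "\<forall>i\<in>I - {i0}. (\<Sum>l\<in>J. (w i l - w i l0 / w i0 l0 * w i0 l) * a l) = 0"
      using insert.IH[of "I - {i0}" "\<lambda>i l. w i l - w i l0 / w i0 l0 * w i0 l"] insert.prems(1) by auto
    show ?thesis
      using homogeneous_system_back_substitution[OF insert.hyps i0(2) a(2)] a(1) insert.hyps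
      by (intro exI[of _ "a(l0 := - (\<Sum>l\<in>J. w i0 l * a l) / w i0 l0)"]) auto
  qed
qed

lemma order_prod_linear_factors:
  fixes xs :: "'a::idom list"
  shows "order x (\<Prod>e\<leftarrow>xs. [:-e, 1:]) = count_list xs x"
proof (induction xs)
  case Nil
  then show ?case using order_0I[of 1 x] by simp
next
  case (Cons e xs)
  have linear: "order x [:-e, 1:] = (if x = e then 1 else 0)"
    using order_power_n_n[of x 1] by (auto intro!: order_0I)
  have "(\<Prod>e'\<leftarrow>e # xs. [:-e', 1:]) \<noteq> 0"
    unfolding prod_list_zero_iff by auto
  then have "order x (\<Prod>e'\<leftarrow>e # xs. [:-e', 1:]) = order x [:-e, 1:] + order x (\<Prod>e\<leftarrow>xs. [:-e, 1:])"
    using order_mult by (simp only: list.map prod_list.Cons)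
  then show ?case
    unfolding linear Cons.IH by simp
qed

lemma poly_prod_linear_factors_eq_0:
  fixes xs :: "'a::idom list"
  shows "poly (\<Prod>e\<leftarrow>xs. [:-e, 1:]) x = 0 \<longleftrightarrow> x \<in> set xs"
  by (induction xs) auto

lemma sum_count_list:
  assumes "finite T"
  shows "(\<Sum>x\<in>T. count_list xs x) = length (filter (\<lambda>x. x \<in> T) xs)"
proof (induction xs)
  case (Cons y xs)
  have "count_list (y # xs) x = count_list xs x + (if y = x then 1 else 0)" for x
    by simp
  then show ?case
    using Cons assms by (simp add: sum.distrib sum.delta)
qed simp

section \<open>Orthogonal diagonalization of real symmetric matrices\<close>

lemma mult_mat_vec_nth:
  assumes "A \<in> carrier_mat n m" and "v \<in> carrier_vec m" and "i < n"
  shows "(A *\<^sub>v v) $ i = (\<Sum>j<m. A $$ (i, j) * v $ j)"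
  using assms by (auto simp: scalar_prod_def lessThan_atLeast0 intro!: sum.cong)

lemma symmetric_complex_eigenvalue_real:
  fixes A :: "real mat"
  assumes A: "A \<in> carrier_mat n n" and sym: "transpose_mat A = A"
    and z: "z \<in> carrier_vec n" "z \<noteq> 0\<^sub>v n"
    and ev: "map_mat complex_of_real A *\<^sub>v z = \<mu> \<cdot>\<^sub>v z"
  shows "Im \<mu> = 0"
proof -
  have sym': "A $$ (j, i) = A $$ (i, j)" if "i < n" "j < n" for i j
    using arg_cong[OF sym, of "\<lambda>M. M $$ (i, j)"] that A by auto
  have row: "(\<Sum>j<n. of_real (A $$ (i, j)) * z $ j) = \<mu> * z $ i" if "i < n" for i
    using arg_cong[OF ev, of "\<lambda>v. v $ i"] mult_mat_vec_nth[of _ n n z i] A z that by simp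
  define s where "s = (\<Sum>i<n. cnj (z $ i) * (\<Sum>j<n. of_real (A $$ (i, j)) * z $ j))"
  define N where "N = (\<Sum>i<n. (cmod (z $ i))\<^sup>2)"
  have "s = \<mu> * (\<Sum>i<n. cnj (z $ i) * z $ i)"
    unfolding s_def using row by (simp add: sum_distrib_left algebra_simps)
  also have "(\<Sum>i<n. cnj (z $ i) * z $ i) = of_real N"
    unfolding N_def of_real_sum by (intro sum.cong refl) (metis complex_norm_square mult.commute of_real_power)
  finally have s_N: "s = \<mu> * of_real N" .
  have "cnj s = (\<Sum>i<n. \<Sum>j<n. of_real (A $$ (i, j)) * z $ i * cnj (z $ j))"
    unfolding s_def by (simp add: sum_distrib_left algebra_simps)
  also have "\<dots> = (\<Sum>j<n. \<Sum>i<n. cnj (z $ j) * (of_real (A $$ (j, i)) * z $ i))"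
    by (subst sum.swap) (auto simp: sym' algebra_simps intro!: sum.cong)
  finally have "cnj s = s" unfolding s_def by (simp add: sum_distrib_left)
  then have "Im s = 0"
    by (metis cnj.simps(2) equal_neg_zero)
  then have "Im \<mu> * N = 0"
    using s_N by simp
  moreover have "N > 0"
  proof -
    obtain i where i: "i < n" "z $ i \<noteq> 0"
      using z by (metis carrier_vecD eq_vecI index_zero_vec)
    have "(cmod (z $ i))\<^sup>2 \<le> N"
      unfolding N_def by (rule member_le_sum) (use i in auto)
    with i show ?thesis by (smt (verit) zero_less_power2 norm_eq_zero)
  qed
  ultimately show ?thesis by simp
qed

lemma real_eigenvector_of_complex:
  fixes A :: "real mat"
  assumes A: "A \<in> carrier_mat n n" and z: "z \<in> carrier_vec n" "z \<noteq> 0\<^sub>v n"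
    and ev: "map_mat complex_of_real A *\<^sub>v z = complex_of_real lam \<cdot>\<^sub>v z"
  shows "\<exists>w. w \<in> carrier_vec n \<and> w \<noteq> 0\<^sub>v n \<and> A *\<^sub>v w = lam \<cdot>\<^sub>v w"
proof -
  obtain i0 where i0: "i0 < n" "z $ i0 \<noteq> 0"
    using z by (metis carrier_vecD eq_vecI index_zero_vec)
  \<comment> \<open>The real or the imaginary part of \<open>z\<close> is a nonzero real eigenvector.\<close>
  obtain f where f: "f = Re \<or> f = Im" "f (z $ i0) \<noteq> 0"
    using i0 complex_eqI[of "z $ i0" 0] by fastforce
  define w where "w = vec n (\<lambda>j. f (z $ j))"
  have "(A *\<^sub>v w) $ i = lam * w $ i" if i: "i < n" for i
  proof -
    have "(\<Sum>j<n. of_real (A $$ (i, j)) * z $ j) = of_real lam * z $ i"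
      using arg_cong[OF ev, of "\<lambda>v. v $ i"] mult_mat_vec_nth[of _ n n z i] A z i by simp
    then have "f (\<Sum>j<n. of_real (A $$ (i, j)) * z $ j) = f (of_real lam * z $ i)"
      by simp
    then show ?thesis
      using f(1) i mult_mat_vec_nth[OF A _ i, of w] by (auto simp: w_def Re_sum Im_sum)
  qed
  moreover have "w \<noteq> 0\<^sub>v n"
    using f i0 by (metis index_vec index_zero_vec(1) w_def)
  ultimately show ?thesis
    using A by (intro exI[of _ w]) (auto simp: w_def intro!: eq_vecI)
qed

lemma symmetric_unit_eigenvector:
  fixes A :: "real mat"
  assumes A: "A \<in> carrier_mat n n" and sym: "transpose_mat A = A" and n: "n > 0"
  obtains lam v where "v \<in> carrier_vec n" "v \<bullet> v = 1" "A *\<^sub>v v = lam \<cdot>\<^sub>v v"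
proof -
  let ?B = "map_mat complex_of_real A"
  obtain \<mu> where "\<mu> \<in> spectrum ?B"
    using spectrum_non_empty[of ?B n] A n by auto
  then obtain z where z: "z \<in> carrier_vec n" "z \<noteq> 0\<^sub>v n" "?B *\<^sub>v z = \<mu> \<cdot>\<^sub>v z"
    using A unfolding spectrum_def eigenvalue_def eigenvector_def by auto
  have "\<mu> = of_real (Re \<mu>)"
    using symmetric_complex_eigenvalue_real[OF A sym z] by (simp add: complex_eq_iff)
  then obtain w where w: "w \<in> carrier_vec n" "w \<noteq> 0\<^sub>v n" "A *\<^sub>v w = Re \<mu> \<cdot>\<^sub>v w"
    using real_eigenvector_of_complex[OF A z(1,2), of "Re \<mu>"] z(3) by auto
  have "w \<bullet> w > 0"
    using conjugate_square_greater_0_vec[OF w(1)] w(2) by simp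
  define v where "v = (1 / sqrt (w \<bullet> w)) \<cdot>\<^sub>v w"
  have "v \<bullet> v = 1"
    using w(1) \<open>w \<bullet> w > 0\<close> by (simp add: v_def smult_scalar_prod_distrib scalar_prod_smult_distrib)
  moreover have "A *\<^sub>v v = Re \<mu> \<cdot>\<^sub>v v"
    using A w by (simp add: v_def mult_mat_vec smult_smult_assoc mult.commute)
  moreover have "v \<in> carrier_vec n"
    using w(1) by (simp add: v_def)
  ultimately show ?thesis
    using that by blast
qed

lemma householder_orthogonal:
  fixes u :: "nat \<Rightarrow> real"
  assumes s: "s = (\<Sum>k<N. (u k)\<^sup>2)" "s \<noteq> 0"
  defines "W \<equiv> mat N N (\<lambda>(i, j). (if i = j then 1 else 0) - 2 * u i * u j / s)"
  shows "transpose_mat W * W = 1\<^sub>m N"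
proof (rule eq_matI)
  fix i j assume "i < dim_row (1\<^sub>m N)" "j < dim_col (1\<^sub>m N)"
  then have i: "i < N" and j: "j < N" by auto
  have entry: "((if k = i then 1 else 0) - 2 * u k * u i / s) * ((if k = j then 1 else 0) - 2 * u k * u j / s)
      = (if k = i \<and> k = j then 1 else 0) - (if k = i then 2 * u k * u j / s else 0)
        - (if k = j then 2 * u k * u i / s else 0) + (u k)\<^sup>2 * (4 * u i * u j / s\<^sup>2)" for k
    using s(2) by (auto simp: field_simps power2_eq_square)
  have "(transpose_mat W * W) $$ (i, j)
      = (\<Sum>k<N. ((if k = i then 1 else 0) - 2 * u k * u i / s) * ((if k = j then 1 else 0) - 2 * u k * u j / s))"
    using i j by (auto simp: W_def scalar_prod_def lessThan_atLeast0 intro!: sum.cong)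
  also have "\<dots> = (if i = j then 1 else 0) - 2 * u i * u j / s - 2 * u j * u i / s + s * (4 * u i * u j / s\<^sup>2)"
    unfolding entry sum.distrib sum_subtractf sum_distrib_right[symmetric] s(1)[symmetric]
    using i j by (simp add: sum.delta)
  also have "\<dots> = 1\<^sub>m N $$ (i, j)"
    using i j s(2) by (simp add: field_simps power2_eq_square)
  finally show "(transpose_mat W * W) $$ (i, j) = 1\<^sub>m N $$ (i, j)" .
qed (auto simp: W_def)

lemma unit_vector_orthogonal_extension:
  fixes v :: "real vec"
  assumes v: "v \<in> carrier_vec N" "v \<bullet> v = 1" and N: "N > 0"
  obtains W where "W \<in> carrier_mat N N" "transpose_mat W * W = 1\<^sub>m N" "col W 0 = v"
proof -
  define u where "u k = (if k = 0 then 1 else 0) - v $ k" for k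
  define s where "s = (\<Sum>k<N. (u k)\<^sup>2)"
  have "(\<Sum>k<N. (v $ k)\<^sup>2) = 1"
    using v by (simp add: scalar_prod_def lessThan_atLeast0 power2_eq_square)
  moreover have "(u k)\<^sup>2 = (if k = 0 then 1 - 2 * v $ k else 0) + (v $ k)\<^sup>2" for k
    by (simp add: u_def power2_eq_square algebra_simps)
  ultimately have s_u0: "s = 2 * u 0"
    using N by (simp add: s_def sum.distrib u_def)
  show ?thesis
  proof (cases "s = 0")
    case True
    have "u k = 0" if "k < N" for k
      using True sum_nonneg_eq_0_iff[of "{..<N}" "\<lambda>k. (u k)\<^sup>2"] that by (simp add: s_def)
    then have "v = unit_vec N 0"
      using v N by (intro eq_vecI) (auto simp: u_def unit_vec_def)
    then show ?thesis
      using that[of "1\<^sub>m N"] N by simp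
  next
    case False
    define W where "W = mat N N (\<lambda>(i, j). (if i = j then 1 else 0) - 2 * u i * u j / s)"
    have "col W 0 = v"
      using v N False by (intro eq_vecI) (auto simp: W_def u_def s_u0 field_simps)
    then show ?thesis
      using householder_orthogonal[OF s_def False] by (intro that[of W]) (auto simp: W_def)
  qed
qed

lemma orthogonal_congruence_eigen_block:
  fixes A W :: "real mat"
  assumes A: "A \<in> carrier_mat (Suc m) (Suc m)" and sym: "transpose_mat A = A"
    and W: "W \<in> carrier_mat (Suc m) (Suc m)" "transpose_mat W * W = 1\<^sub>m (Suc m)" "col W 0 = v"
    and ev: "A *\<^sub>v v = lam \<cdot>\<^sub>v v"
  defines "A' \<equiv> transpose_mat W * A * W"
  shows "transpose_mat A' = A'"
    and "A' = four_block_mat (mat 1 1 (\<lambda>_. lam)) (0\<^sub>m 1 m) (0\<^sub>m m 1) (mat m m (\<lambda>(i, j). A' $$ (Suc i, Suc j)))"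
proof -
  have WT: "transpose_mat W \<in> carrier_mat (Suc m) (Suc m)" using W by simp
  have AW: "A * W \<in> carrier_mat (Suc m) (Suc m)" using A W by simp
  have A': "A' \<in> carrier_mat (Suc m) (Suc m)" unfolding A'_def using W A by simp
  have "transpose_mat A' = transpose_mat (transpose_mat W * (A * W))"
    unfolding A'_def using W A WT by simp
  also have "\<dots> = transpose_mat W * A * W"
    using transpose_mult[OF WT AW] transpose_mult[OF A W(1)] sym by simp
  finally show A'_sym: "transpose_mat A' = A'" unfolding A'_def .
  have "col A' 0 = transpose_mat W *\<^sub>v (A *\<^sub>v col W 0)"
    unfolding A'_def using W A WT col_mult2[OF WT AW] col_mult2[OF A W(1)] by simp
  also have "\<dots> = lam \<cdot>\<^sub>v col (transpose_mat W * W) 0"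
    using W WT ev col_mult2[OF WT W(1)] mult_mat_vec[OF WT, of v] by auto
  finally have col0: "col A' 0 = lam \<cdot>\<^sub>v unit_vec (Suc m) 0"
    using W(2) by simp
  have A'_i0: "A' $$ (i, 0) = (if i = 0 then lam else 0)" if "i < Suc m" for i
    using arg_cong[OF col0, of "\<lambda>x. x $ i"] that A' by (auto simp: unit_vec_def)
  have A'_0j: "A' $$ (0, j) = (if j = 0 then lam else 0)" if "j < Suc m" for j
    using arg_cong[OF A'_sym, of "\<lambda>M. M $$ (j, 0)"] A'_i0[OF that] that A' by auto
  show "A' = four_block_mat (mat 1 1 (\<lambda>_. lam)) (0\<^sub>m 1 m) (0\<^sub>m m 1) (mat m m (\<lambda>(i, j). A' $$ (Suc i, Suc j)))"
  proof (rule eq_matI)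
    fix i j assume "i < dim_row (four_block_mat (mat 1 1 (\<lambda>_. lam)) (0\<^sub>m 1 m) (0\<^sub>m m 1) (mat m m (\<lambda>(i, j). A' $$ (Suc i, Suc j))))"
      "j < dim_col (four_block_mat (mat 1 1 (\<lambda>_. lam)) (0\<^sub>m 1 m) (0\<^sub>m m 1) (mat m m (\<lambda>(i, j). A' $$ (Suc i, Suc j))))"
    then have "i < Suc m" "j < Suc m" by auto
    then show "A' $$ (i, j) = four_block_mat (mat 1 1 (\<lambda>_. lam)) (0\<^sub>m 1 m) (0\<^sub>m m 1) (mat m m (\<lambda>(i, j). A' $$ (Suc i, Suc j))) $$ (i, j)"
      using A'_i0 A'_0j by (cases i; cases j) auto
  qed (use A' in auto)
qed

lemma block_orthogonal_congruence:
  fixes P A1 A2 :: "'a::comm_ring_1 mat"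
  assumes P: "P \<in> carrier_mat m m" "transpose_mat P * P = 1\<^sub>m m"
    and A1: "A1 \<in> carrier_mat 1 1" and A2: "A2 \<in> carrier_mat m m"
  defines "F \<equiv> four_block_mat (1\<^sub>m 1) (0\<^sub>m 1 m) (0\<^sub>m m 1) P"
  shows "F \<in> carrier_mat (Suc m) (Suc m)"
    and "transpose_mat F * F = 1\<^sub>m (Suc m)"
    and "transpose_mat F * four_block_mat A1 (0\<^sub>m 1 m) (0\<^sub>m m 1) A2 * F
       = four_block_mat A1 (0\<^sub>m 1 m) (0\<^sub>m m 1) (transpose_mat P * A2 * P)"
proof -
  have PT: "transpose_mat P \<in> carrier_mat m m" using P by simp
  have FT: "transpose_mat F = four_block_mat (1\<^sub>m 1) (0\<^sub>m 1 m) (0\<^sub>m m 1) (transpose_mat P)"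
    unfolding F_def using P by (subst transpose_four_block_mat[of _ 1 1 _ m _ m]) auto
  show "F \<in> carrier_mat (Suc m) (Suc m)"
    unfolding F_def using four_block_carrier_mat[OF one_carrier_mat P(1), of 1] by simp
  show "transpose_mat F * F = 1\<^sub>m (Suc m)"
    unfolding FT unfolding F_def using P PT by (subst mult_four_block_mat[of _ 1 1 _ m _ m _ _ 1 _ m]) auto
  show "transpose_mat F * four_block_mat A1 (0\<^sub>m 1 m) (0\<^sub>m m 1) A2 * F
      = four_block_mat A1 (0\<^sub>m 1 m) (0\<^sub>m m 1) (transpose_mat P * A2 * P)"
    unfolding FT unfolding F_def using P PT A1 A2
    by (subst mult_four_block_mat[of _ 1 1 _ m _ m _ _ 1 _ m], auto)+
qed

lemma transpose_mult_congruence: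
  fixes A W F :: "'a::comm_ring_1 mat"
  assumes A: "A \<in> carrier_mat n n" and W: "W \<in> carrier_mat n n" and F: "F \<in> carrier_mat n n"
  shows "transpose_mat (W * F) * A * (W * F) = transpose_mat F * (transpose_mat W * A * W) * F"
proof -
  have WT: "transpose_mat W \<in> carrier_mat n n" and FT: "transpose_mat F \<in> carrier_mat n n"
    using W F by auto
  have WTA: "transpose_mat W * A \<in> carrier_mat n n" using WT A by simp
  have "transpose_mat (W * F) * A * (W * F) = transpose_mat F * (transpose_mat W * A) * (W * F)"
    using transpose_mult[OF W F] assoc_mult_mat[OF FT WT A] by simp
  also have "\<dots> = transpose_mat F * ((transpose_mat W * A * W) * F)"
    using assoc_mult_mat[OF FT WTA, of "W * F" n] assoc_mult_mat[OF WTA W F] W F by simp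
  also have "\<dots> = transpose_mat F * (transpose_mat W * A * W) * F"
    using assoc_mult_mat[OF FT _ F, of "transpose_mat W * A * W"] WTA W by simp
  finally show ?thesis .
qed

lemma orthogonal_mult:
  fixes W F :: "'a::comm_ring_1 mat"
  assumes "W \<in> carrier_mat n n" "transpose_mat W * W = 1\<^sub>m n"
    and "F \<in> carrier_mat n n" "transpose_mat F * F = 1\<^sub>m n"
  shows "transpose_mat (W * F) * (W * F) = 1\<^sub>m n"
  using transpose_mult_congruence[OF one_carrier_mat assms(1,3)] assms by simp

lemma four_block_mat_diag:
  "four_block_mat (mat 1 1 (\<lambda>_. x)) (0\<^sub>m 1 m) (0\<^sub>m m 1) (mat_diag m d) = mat_diag (Suc m) (case_nat x d)"
  by (rule eq_matI) (auto simp: mat_diag_def split: nat.split)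

theorem symmetric_orthogonal_diagonalization:
  fixes A :: "real mat"
  assumes "A \<in> carrier_mat n n" and "transpose_mat A = A"
  shows "\<exists>P d. P \<in> carrier_mat n n \<and> transpose_mat P * P = 1\<^sub>m n \<and> transpose_mat P * A * P = mat_diag n d"
  using assms
proof (induction n arbitrary: A)
  case 0
  then show ?case
    by (intro exI[of _ "1\<^sub>m 0"] exI[of _ "\<lambda>_. 0"]) (auto simp: mat_diag_def intro!: eq_matI)
next
  case (Suc m)
  obtain lam v where v: "v \<in> carrier_vec (Suc m)" "v \<bullet> v = 1" "A *\<^sub>v v = lam \<cdot>\<^sub>v v"
    using symmetric_unit_eigenvector[OF Suc.prems] by blast
  obtain W where W: "W \<in> carrier_mat (Suc m) (Suc m)" "transpose_mat W * W = 1\<^sub>m (Suc m)" "col W 0 = v"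
    using unit_vector_orthogonal_extension[OF v(1,2)] by blast
  define A' where "A' = transpose_mat W * A * W"
  define A2 where "A2 = mat m m (\<lambda>(i, j). A' $$ (Suc i, Suc j))"
  have A'_sym: "transpose_mat A' = A'"
    and A'_block: "A' = four_block_mat (mat 1 1 (\<lambda>_. lam)) (0\<^sub>m 1 m) (0\<^sub>m m 1) A2"
    using orthogonal_congruence_eigen_block[OF Suc.prems W v(3)] unfolding A'_def A2_def by blast+
  have "A' $$ (j, i) = A' $$ (i, j)" if "i < Suc m" "j < Suc m" for i j
    using arg_cong[OF A'_sym, of "\<lambda>M. M $$ (i, j)"] that W(1) Suc.prems(1) by (simp add: A'_def)
  then have "transpose_mat A2 = A2"
    by (intro eq_matI) (auto simp: A2_def)
  with Suc.IH[of A2] obtain P2 d2 where P2: "P2 \<in> carrier_mat m m" "transpose_mat P2 * P2 = 1\<^sub>m m"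
    "transpose_mat P2 * A2 * P2 = mat_diag m d2"
    by (auto simp: A2_def)
  define F where "F = four_block_mat (1\<^sub>m 1) (0\<^sub>m 1 m) (0\<^sub>m m 1) P2"
  have "mat 1 1 (\<lambda>_. lam) \<in> carrier_mat 1 1" "A2 \<in> carrier_mat m m"
    by (auto simp: A2_def)
  note F = block_orthogonal_congruence[OF P2(1,2) this, folded F_def]
  have "transpose_mat (W * F) * A * (W * F) = mat_diag (Suc m) (case_nat lam d2)"
    using transpose_mult_congruence[OF Suc.prems(1) W(1) F(1)] F(3) P2(3) A'_block
      four_block_mat_diag[of lam m d2]
    by (simp add: A'_def A2_def)
  then show ?case
    using orthogonal_mult[OF W(1,2) F(1,2)] W(1) F(1)
    by (intro exI[of _ "W * F"] exI[of _ "case_nat lam d2"]) simp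
qed

section \<open>Counting eigenvalues below a threshold\<close>

definition eigenvalue_count :: "real mat \<Rightarrow> real \<Rightarrow> nat" where
  "eigenvalue_count L c = (\<Sum>x\<in>{x. eigenvalue L x \<and> x < c}. order x (char_poly L))"

lemma eigenvalue_count_similar:
  assumes "similar_mat A B" and "A \<in> carrier_mat n n" and "B \<in> carrier_mat n n"
  shows "eigenvalue_count A c = eigenvalue_count B c"
  using char_poly_similar[OF assms(1)] eigenvalue_root_char_poly[OF assms(2)]
    eigenvalue_root_char_poly[OF assms(3)]
  by (simp add: eigenvalue_count_def)

lemma eigenvalue_count_mat_diag: "eigenvalue_count (mat_diag n d) c = card {i. i < n \<and> d i < c}"
proof -
  have "diag_mat (mat_diag n d) = map d [0..<n]"
    by (simp add: diag_mat_def mat_diag_def)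
  then have char_poly: "char_poly (mat_diag n d) = (\<Prod>e\<leftarrow>map d [0..<n]. [:-e, 1:])"
    using char_poly_upper_triangular[of "mat_diag n d" n] by (simp add: upper_triangular_def mat_diag_def)
  then have "{x. eigenvalue (mat_diag n d) x \<and> x < c} = {x \<in> set (map d [0..<n]). x < c}"
    unfolding eigenvalue_root_char_poly[OF mat_diag_dim] char_poly poly_prod_linear_factors_eq_0 by blast
  then have "eigenvalue_count (mat_diag n d) c = length (filter (\<lambda>x. x \<in> {x \<in> set (map d [0..<n]). x < c}) (map d [0..<n]))"
    unfolding eigenvalue_count_def char_poly order_prod_linear_factors by (simp add: sum_count_list)
  also have "\<dots> = length (filter (\<lambda>i. d i < c) [0..<n])"
    by (auto simp: filter_map comp_def intro!: arg_cong[where f = length] filter_cong)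
  also have "\<dots> = card {i. i < n \<and> d i < c}"
    by (auto simp: length_filter_conv_card intro!: arg_cong[where f = card])
  finally show ?thesis .
qed

lemma mat_diag_quadratic_form:
  fixes d :: "nat \<Rightarrow> 'a::comm_ring_1"
  assumes "y \<in> carrier_vec n"
  shows "y \<bullet> (mat_diag n d *\<^sub>v y) = (\<Sum>i<n. d i * (y $ i)\<^sup>2)"
proof -
  have "(mat_diag n d *\<^sub>v y) $ i = d i * y $ i" if "i < n" for i
  proof -
    have "(mat_diag n d *\<^sub>v y) $ i = (\<Sum>j<n. if j = i then d i * y $ i else 0)"
      unfolding mult_mat_vec_nth[OF mat_diag_dim assms that] using that
      by (intro sum.cong) (auto simp: mat_diag_def)
    then show ?thesis using that by simp
  qed
  then have "mat_diag n d *\<^sub>v y = vec n (\<lambda>i. d i * y $ i)"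
    using assms by (intro eq_vecI) (auto simp: mat_diag_def)
  then show ?thesis
    using assms by (auto simp: scalar_prod_def lessThan_atLeast0 power2_eq_square intro!: sum.cong)
qed

lemma orthogonal_quadratic_form:
  fixes L P :: "real mat"
  assumes P: "P \<in> carrier_mat n n" "transpose_mat P * P = 1\<^sub>m n"
    and L: "L \<in> carrier_mat n n" and x: "x \<in> carrier_vec n"
  defines "y \<equiv> transpose_mat P *\<^sub>v x"
  shows "x \<bullet> (L *\<^sub>v x) = y \<bullet> ((transpose_mat P * L * P) *\<^sub>v y)" and "x \<bullet> x = y \<bullet> y"
proof -
  have PT: "transpose_mat P \<in> carrier_mat n n" using P by simp
  have y: "y \<in> carrier_vec n" unfolding y_def using PT x by simp
  have "P * transpose_mat P = 1\<^sub>m n"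
    using mat_mult_left_right_inverse[OF PT P(1,2)] .
  then have x_Py: "x = P *\<^sub>v y"
    unfolding y_def using assoc_mult_mat_vec[OF P(1) PT x] x by simp
  have "x \<bullet> (L *\<^sub>v x) = (transpose_mat (transpose_mat P) *\<^sub>v y) \<bullet> (L *\<^sub>v x)"
    by (simp only: transpose_transpose x_Py[symmetric])
  also have "\<dots> = y \<bullet> (transpose_mat P *\<^sub>v (L *\<^sub>v (P *\<^sub>v y)))"
    using transpose_vec_mult_scalar[OF PT _ y, of "L *\<^sub>v x"] L x x_Py by simp
  also have "\<dots> = y \<bullet> ((transpose_mat P * L * P) *\<^sub>v y)"
  proof -
    have "transpose_mat P * L \<in> carrier_mat n n" "P *\<^sub>v y \<in> carrier_vec n"
      using PT L P(1) y by auto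
    then show ?thesis
      using assoc_mult_mat_vec[OF PT L, of "P *\<^sub>v y"] assoc_mult_mat_vec[of _ n n P n y] P(1) y by simp
  qed
  finally show "x \<bullet> (L *\<^sub>v x) = y \<bullet> ((transpose_mat P * L * P) *\<^sub>v y)" .
  have "x \<bullet> x = (transpose_mat (transpose_mat P) *\<^sub>v y) \<bullet> x"
    by (simp only: transpose_transpose x_Py[symmetric])
  also have "\<dots> = y \<bullet> (transpose_mat P *\<^sub>v x)"
    by (rule transpose_vec_mult_scalar[OF PT x y])
  finally show "x \<bullet> x = y \<bullet> y"
    by (simp add: y_def)
qed

lemma eigenvalue_count_orthogonal_diag:
  fixes L P :: "real mat"
  assumes L: "L \<in> carrier_mat n n" and P: "P \<in> carrier_mat n n" "transpose_mat P * P = 1\<^sub>m n"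
    and PLP: "transpose_mat P * L * P = mat_diag n d"
  shows "eigenvalue_count L c = card {i. i < n \<and> d i < c}"
proof -
  have PT: "transpose_mat P \<in> carrier_mat n n" using P by simp
  have PPT: "P * transpose_mat P = 1\<^sub>m n"
    using mat_mult_left_right_inverse[OF PT P(1,2)] .
  have "P * (transpose_mat P * L * P) * transpose_mat P = (P * transpose_mat P) * L * (P * transpose_mat P)"
    using P PT L by (simp add: assoc_mult_mat[of _ n n _ n _ n])
  then have "L = P * mat_diag n d * transpose_mat P"
    using PPT L by (simp add: PLP)
  then have "similar_mat L (mat_diag n d)"
    using P PT L PPT by (intro similar_matI[of _ _ P "transpose_mat P" n]) auto
  then show ?thesis
    using eigenvalue_count_similar[OF _ L mat_diag_dim] eigenvalue_count_mat_diag by metis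
qed

lemma mat_diag_quadratic_form_ge:
  fixes d :: "nat \<Rightarrow> real"
  assumes y: "y \<in> carrier_vec n" and zero: "\<And>i. i < n \<Longrightarrow> d i < c \<Longrightarrow> y $ i = 0"
  shows "c * (y \<bullet> y) \<le> y \<bullet> (mat_diag n d *\<^sub>v y)"
proof -
  have "c * (y \<bullet> y) = (\<Sum>i<n. c * (y $ i)\<^sup>2)"
    using y by (simp add: scalar_prod_def lessThan_atLeast0 power2_eq_square sum_distrib_left)
  also have "\<dots> \<le> (\<Sum>i<n. d i * (y $ i)\<^sup>2)"
  proof (intro sum_mono)
    fix i assume "i \<in> {..<n}"
    then show "c * (y $ i)\<^sup>2 \<le> d i * (y $ i)\<^sup>2"
      using zero[of i] by (cases "d i < c") (auto simp: mult_right_mono)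
  qed
  finally show ?thesis
    unfolding mat_diag_quadratic_form[OF y] .
qed

text \<open>If fewer than \<open>card J\<close> eigenvalues were below \<open>c\<close>, the span of the vectors \<open>U l\<close> would
  meet the span of the eigenvectors for eigenvalues \<open>\<ge> c\<close> nontrivially.\<close>

theorem eigenvalue_count_ge_card:
  fixes L :: "real mat" and U :: "'j \<Rightarrow> nat \<Rightarrow> real"
  assumes L: "L \<in> carrier_mat n n" and sym: "transpose_mat L = L" and J: "finite J"
    and rayleigh: "\<And>a. \<exists>l\<in>J. a l \<noteq> 0 \<Longrightarrow>
      vec n (\<lambda>i. \<Sum>l\<in>J. a l * U l i) \<bullet> (L *\<^sub>v vec n (\<lambda>i. \<Sum>l\<in>J. a l * U l i))
        < c * (vec n (\<lambda>i. \<Sum>l\<in>J. a l * U l i) \<bullet> vec n (\<lambda>i. \<Sum>l\<in>J. a l * U l i))"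
  shows "card J \<le> eigenvalue_count L c"
proof (rule ccontr)
  obtain P d where P: "P \<in> carrier_mat n n" "transpose_mat P * P = 1\<^sub>m n"
    and PLP: "transpose_mat P * L * P = mat_diag n d"
    using symmetric_orthogonal_diagonalization[OF L sym] by blast
  have PT: "transpose_mat P \<in> carrier_mat n n" using P by simp
  define K where "K = {i. i < n \<and> d i < c}"
  assume "\<not> card J \<le> eigenvalue_count L c"
  then have "card K < card J"
    unfolding eigenvalue_count_orthogonal_diag[OF L P PLP] K_def by simp
  then obtain a where a: "\<exists>l\<in>J. a l \<noteq> 0"
    and a_K: "\<forall>i\<in>K. (\<Sum>l\<in>J. (\<Sum>k<n. P $$ (k, i) * U l k) * a l) = 0"
    using homogeneous_system_nontrivial_solution[OF J, of K "\<lambda>i l. \<Sum>k<n. P $$ (k, i) * U l k"]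
    by (auto simp: K_def)
  define x where "x = vec n (\<lambda>i. \<Sum>l\<in>J. a l * U l i)"
  define y where "y = transpose_mat P *\<^sub>v x"
  have x: "x \<in> carrier_vec n" unfolding x_def by simp
  have "y $ i = 0" if "i < n" "d i < c" for i
  proof -
    have "y $ i = (\<Sum>k<n. transpose_mat P $$ (i, k) * x $ k)"
      unfolding y_def by (rule mult_mat_vec_nth[OF PT x \<open>i < n\<close>])
    also have "\<dots> = (\<Sum>k<n. \<Sum>l\<in>J. P $$ (k, i) * U l k * a l)"
      using that P by (intro sum.cong) (auto simp: x_def sum_distrib_left algebra_simps)
    also have "\<dots> = (\<Sum>l\<in>J. (\<Sum>k<n. P $$ (k, i) * U l k) * a l)"
      by (subst sum.swap) (simp add: sum_distrib_right)
    finally show ?thesis using a_K that by (simp add: K_def)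
  qed
  then have "c * (y \<bullet> y) \<le> y \<bullet> (mat_diag n d *\<^sub>v y)"
    using PT x by (intro mat_diag_quadratic_form_ge) (auto simp: y_def)
  then have "c * (x \<bullet> x) \<le> x \<bullet> (L *\<^sub>v x)"
    using orthogonal_quadratic_form[OF P L x] PLP by (simp add: y_def)
  with rayleigh[OF a] show False by (simp add: x_def)
qed

section \<open>The normalized Laplacian\<close>

lemma degree_eq_sum: "i < n \<Longrightarrow> degree n E i = (\<Sum>j<n. of_bool (E i j))"
  unfolding degree_def adj_matrix_def by (intro sum.cong) auto

lemma degree_pos:
  assumes "simple_graph n E" and "i < n" and "E i j"
  shows "degree n E i > 0"
proof -
  have "j < n" using assms unfolding simple_graph_def by blast
  then have "1 \<le> (\<Sum>j<n. of_bool (E i j) :: real)"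
    using member_le_sum[of j "{..<n}" "\<lambda>j. of_bool (E i j) :: real"] assms(3) by simp
  then show ?thesis using degree_eq_sum[OF assms(2)] by simp
qed

lemma deg_inv_sqrt_mat_diag: "deg_inv_sqrt n E = mat_diag n (\<lambda>i. 1 / sqrt (degree n E i))"
  unfolding deg_inv_sqrt_def mat_diag_def by (rule eq_matI) auto

lemma norm_laplacian_carrier: "norm_laplacian n E \<in> carrier_mat n n"
  unfolding norm_laplacian_def deg_inv_sqrt_def adj_matrix_def by (rule minus_carrier_mat) auto

lemma norm_laplacian_index:
  assumes "i < n" and "j < n"
  shows "norm_laplacian n E $$ (i, j)
    = of_bool (i = j) - of_bool (E i j) / (sqrt (degree n E i) * sqrt (degree n E j))"
proof -
  have A: "adj_matrix n E \<in> carrier_mat n n" by (simp add: adj_matrix_def)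
  have "deg_inv_sqrt n E * adj_matrix n E * deg_inv_sqrt n E
      = mat n n (\<lambda>(i, j). 1 / sqrt (degree n E i) * adj_matrix n E $$ (i, j) * (1 / sqrt (degree n E j)))"
    unfolding deg_inv_sqrt_mat_diag mat_diag_mult_left[OF A] by (subst mat_diag_mult_right) auto
  then show ?thesis
    using assms by (simp add: norm_laplacian_def adj_matrix_def deg_inv_sqrt_def)
qed

lemma transpose_norm_laplacian:
  assumes "simple_graph n E"
  shows "transpose_mat (norm_laplacian n E) = norm_laplacian n E"
proof -
  have "E i j \<longleftrightarrow> E j i" for i j using assms unfolding simple_graph_def by blast
  then show ?thesis
    using norm_laplacian_carrier[of n E]
    by (intro eq_matI) (auto simp: norm_laplacian_index mult.commute)
qed

lemma sum_edges_diff_square: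
  assumes "simple_graph n E"
  shows "(\<Sum>i<n. \<Sum>j<n. of_bool (E i j) * (f i - f j)\<^sup>2)
    = 2 * ((\<Sum>i<n. degree n E i * (f i)\<^sup>2) - (\<Sum>i<n. \<Sum>j<n. of_bool (E i j) * f i * f j))"
proof -
  have sym: "E i j \<longleftrightarrow> E j i" for i j using assms unfolding simple_graph_def by blast
  have "(\<Sum>i<n. \<Sum>j<n. of_bool (E i j) * (f i - f j)\<^sup>2)
      = (\<Sum>i<n. \<Sum>j<n. of_bool (E i j) * (f i)\<^sup>2) + (\<Sum>i<n. \<Sum>j<n. of_bool (E i j) * (f j)\<^sup>2)
        - 2 * (\<Sum>i<n. \<Sum>j<n. of_bool (E i j) * f i * f j)"
    by (simp add: power2_diff algebra_simps sum.distrib sum_subtractf sum_distrib_left)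
  also have "(\<Sum>i<n. \<Sum>j<n. of_bool (E i j) * (f j)\<^sup>2) = (\<Sum>i<n. \<Sum>j<n. of_bool (E i j) * (f i)\<^sup>2)"
    by (subst sum.swap) (simp add: sym)
  also have "(\<Sum>i<n. \<Sum>j<n. of_bool (E i j) * (f i)\<^sup>2) = (\<Sum>i<n. degree n E i * (f i)\<^sup>2)"
    by (intro sum.cong) (simp_all add: degree_eq_sum sum_distrib_right)
  finally show ?thesis by simp
qed

lemma norm_laplacian_quadratic_form:
  fixes f :: "nat \<Rightarrow> real"
  assumes G: "simple_graph n E" and deg: "\<And>i. i < n \<Longrightarrow> degree n E i > 0"
  defines "x \<equiv> vec n (\<lambda>i. sqrt (degree n E i) * f i)"
  shows "x \<bullet> (norm_laplacian n E *\<^sub>v x) = (\<Sum>i<n. \<Sum>j<n. of_bool (E i j) * (f i - f j)\<^sup>2) / 2"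
    and "x \<bullet> x = (\<Sum>i<n. degree n E i * (f i)\<^sup>2)"
proof -
  let ?d = "degree n E"
  have x: "x \<in> carrier_vec n" unfolding x_def by simp
  have Lx: "x $ i * (norm_laplacian n E *\<^sub>v x) $ i = ?d i * (f i)\<^sup>2 - (\<Sum>j<n. of_bool (E i j) * f i * f j)"
    if i: "i < n" for i
  proof -
    define s where "s = (\<Sum>j<n. of_bool (E i j) * f j)"
    have "(norm_laplacian n E *\<^sub>v x) $ i
        = (\<Sum>j<n. (if j = i then sqrt (?d i) * f i else 0) - of_bool (E i j) * f j / sqrt (?d i))"
      unfolding mult_mat_vec_nth[OF norm_laplacian_carrier x i]
      using i by (intro sum.cong) (auto simp: norm_laplacian_index x_def field_simps dest: deg)
    also have "\<dots> = sqrt (?d i) * f i - s / sqrt (?d i)"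
      unfolding s_def using i by (simp only: sum_subtractf sum_divide_distrib[symmetric]) simp
    finally have "x $ i * (norm_laplacian n E *\<^sub>v x) $ i = sqrt (?d i) * f i * (sqrt (?d i) * f i - s / sqrt (?d i))"
      using i by (simp add: x_def)
    also have "\<dots> = ?d i * (f i)\<^sup>2 - f i * s"
      using deg[OF i] by (simp add: field_simps power2_eq_square)
    finally show ?thesis
      by (simp add: s_def sum_distrib_left mult.assoc mult.left_commute del: sum_mult_of_bool_eq sum_of_bool_mult_eq)
  qed
  have "x \<bullet> (norm_laplacian n E *\<^sub>v x) = (\<Sum>i<n. ?d i * (f i)\<^sup>2) - (\<Sum>i<n. \<Sum>j<n. of_bool (E i j) * f i * f j)"
    using x norm_laplacian_carrier[of n E] Lx
    by (simp add: scalar_prod_def lessThan_atLeast0 sum_subtractf)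
  then show "x \<bullet> (norm_laplacian n E *\<^sub>v x) = (\<Sum>i<n. \<Sum>j<n. of_bool (E i j) * (f i - f j)\<^sup>2) / 2"
    using sum_edges_diff_square[OF G, of f] by simp
  show "x \<bullet> x = (\<Sum>i<n. ?d i * (f i)\<^sup>2)"
    by (auto simp: x_def scalar_prod_def lessThan_atLeast0 power2_eq_square algebra_simps abs_of_pos deg
        intro!: sum.cong)
qed

section \<open>Dangling sets and step functions\<close>

lemma card_boundary_edges:
  "card (boundary_edges n E S) = card {(i, j). i \<in> S \<and> j \<in> {..<n} - S \<and> E i j}"
proof -
  let ?P = "{(i, j). i \<in> S \<and> j \<in> {..<n} - S \<and> E i j}"
  have "boundary_edges n E S = (\<lambda>(i, j). {i, j}) ` ?P"
    unfolding boundary_edges_def by auto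
  moreover have "inj_on (\<lambda>(i, j). {i, j}) ?P"
    by (auto simp: inj_on_def doubleton_eq_iff)
  ultimately show ?thesis
    by (simp add: card_image)
qed

lemma card_induced_edges_le:
  assumes G: "simple_graph n E" and S: "finite S"
  shows "2 * card (induced_edges E S) \<le> card {(i, j). i \<in> S \<and> j \<in> S \<and> E i j}"
proof -
  let ?W = "{(i, j). i \<in> S \<and> j \<in> S \<and> E i j}"
  define W1 where "W1 = {(i, j). i \<in> S \<and> j \<in> S \<and> E i j \<and> i < j}"
  have sym: "E i j \<Longrightarrow> E j i" and irrefl: "\<not> E i i" for i j
    using G unfolding simple_graph_def by blast+
  have fin: "finite ?W"
    by (rule finite_subset[of _ "S \<times> S"]) (use S in auto)
  have "induced_edges E S = (\<lambda>(i, j). {i, j}) ` W1"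
  proof (intro equalityI subsetI)
    fix e assume "e \<in> induced_edges E S"
    then obtain i j where e: "e = {i, j}" "i \<in> S" "j \<in> S" "E i j"
      unfolding induced_edges_def by blast
    moreover have "i \<noteq> j" using e(4) irrefl by auto
    ultimately have "(i, j) \<in> W1 \<or> (j, i) \<in> W1"
      using sym by (auto simp: W1_def linorder_neq_iff)
    then show "e \<in> (\<lambda>(i, j). {i, j}) ` W1"
      using e by (auto simp: insert_commute intro: rev_image_eqI)
  qed (auto simp: W1_def induced_edges_def)
  moreover have "finite W1"
    by (rule finite_subset[OF _ fin]) (auto simp: W1_def)
  ultimately have "card (induced_edges E S) \<le> card W1"
    by (simp add: card_image_le)
  moreover have "card W1 + card (prod.swap ` W1) = card (W1 \<union> prod.swap ` W1)"
    using \<open>finite W1\<close> by (intro card_Un_disjoint[symmetric]) (auto simp: W1_def)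
  moreover have "card (W1 \<union> prod.swap ` W1) \<le> card ?W"
    using sym by (intro card_mono[OF fin]) (auto simp: W1_def)
  ultimately show ?thesis
    by (simp add: card_image)
qed

lemma vol_eq_card_pairs:
  assumes "S \<subseteq> {..<n}"
  shows "vol n E S = card {(i, j). i \<in> S \<and> j \<in> S \<and> E i j} + card {(i, j). i \<in> S \<and> j \<in> {..<n} - S \<and> E i j}"
proof -
  have S: "finite S" using assms finite_subset by blast
  have "vol n E S = (\<Sum>i\<in>S. real (card {j. j < n \<and> E i j}))"
    unfolding vol_def using assms by (intro sum.cong) (auto simp: degree_eq_sum Int_def)
  also have "\<dots> = card (SIGMA i:S. {j. j < n \<and> E i j})"
    using S by (simp add: card_SigmaI)
  also have "(SIGMA i:S. {j. j < n \<and> E i j})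
      = {(i, j). i \<in> S \<and> j \<in> S \<and> E i j} \<union> {(i, j). i \<in> S \<and> j \<in> {..<n} - S \<and> E i j}"
    using assms by auto
  also have "card \<dots> = card {(i, j). i \<in> S \<and> j \<in> S \<and> E i j} + card {(i, j). i \<in> S \<and> j \<in> {..<n} - S \<and> E i j}"
  proof (rule card_Un_disjoint)
    show "finite {(i, j). i \<in> S \<and> j \<in> S \<and> E i j}"
      by (rule finite_subset[of _ "S \<times> S"]) (use S in auto)
    show "finite {(i, j). i \<in> S \<and> j \<in> {..<n} - S \<and> E i j}"
      by (rule finite_subset[of _ "S \<times> {..<n}"]) (use S in auto)
  qed auto
  finally show ?thesis by simp
qed

text \<open>A \<open>g\<close>-dangling tree contributes \<open>2 (g - 1)\<close> to its volume through its own edges and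
  \<open>1\<close> through its unique boundary edge.\<close>

lemma vol_dangling_ge:
  assumes G: "simple_graph n E" and D: "dangling n E g S"
  shows "2 * real g - 1 \<le> vol n E S"
proof -
  have S: "S \<subseteq> {..<n}" and ind: "card (induced_edges E S) = g - 1"
    and bd: "card (boundary_edges n E S) = 1"
    using D unfolding dangling_def by auto
  have "2 * (g - 1) \<le> card {(i, j). i \<in> S \<and> j \<in> S \<and> E i j}"
    using card_induced_edges_le[OF G finite_subset[OF S]] ind by simp
  then show ?thesis
    using vol_eq_card_pairs[OF S, of E] bd unfolding card_boundary_edges by linarith
qed

definition step_fun :: "'j set \<Rightarrow> ('j \<Rightarrow> 'a set) \<Rightarrow> ('j \<Rightarrow> real) \<Rightarrow> 'a \<Rightarrow> real" where
  "step_fun J S a i = (\<Sum>l\<in>J. if i \<in> S l then a l else 0)"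

lemma step_fun_eq:
  assumes "finite J" and "disjoint_family_on S J" and "l \<in> J" and "i \<in> S l"
  shows "step_fun J S a i = a l"
proof -
  have "step_fun J S a i = (\<Sum>l'\<in>J. if l' = l then a l else 0)"
    unfolding step_fun_def using assms(2-4) by (intro sum.cong) (auto simp: disjoint_family_on_def)
  then show ?thesis using assms(1,3) by simp
qed

lemma step_fun_eq_0: "\<forall>l\<in>J. i \<notin> S l \<Longrightarrow> step_fun J S a i = 0"
  unfolding step_fun_def by (intro sum.neutral) auto

lemma step_fun_square:
  assumes "finite J" and "disjoint_family_on S J"
  shows "(step_fun J S a i)\<^sup>2 = step_fun J S (\<lambda>l. (a l)\<^sup>2) i"
proof (cases "\<exists>l\<in>J. i \<in> S l")
  case True
  then show ?thesis using step_fun_eq[OF assms] by auto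
next
  case False
  then show ?thesis by (simp add: step_fun_eq_0)
qed

lemma sum_boundary_indicator:
  fixes n :: nat
  assumes "S \<subseteq> {..<n}"
  shows "(\<Sum>i<n. \<Sum>j<n. of_bool (E i j \<and> i \<in> S \<and> j \<notin> S) :: real)
    = card {(i, j). i \<in> S \<and> j \<in> {..<n} - S \<and> E i j}"
proof -
  let ?P = "\<lambda>(i, j). E i j \<and> i \<in> S \<and> j \<notin> S"
  have "(\<Sum>i<n. \<Sum>j<n. of_bool (E i j \<and> i \<in> S \<and> j \<notin> S) :: real)
      = card (({..<n} \<times> {..<n}) \<inter> {p. ?P p})"
    using sum_of_bool_eq[of "{..<n} \<times> {..<n}" ?P, where 'a = real]
    by (simp only: sum.cartesian_product split_def finite_cartesian_product finite_lessThan simp_thms)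
  also have "({..<n} \<times> {..<n}) \<inter> {p. ?P p} = {(i, j). i \<in> S \<and> j \<in> {..<n} - S \<and> E i j}"
    using assms by auto
  finally show ?thesis .
qed

lemma step_fun_jump_le:
  fixes a :: "'j \<Rightarrow> real"
  assumes J: "finite J" and disj: "disjoint_family_on S J"
  shows "(step_fun J S a i - step_fun J S a j)\<^sup>2
    \<le> 2 * (\<Sum>l\<in>J. of_bool (i \<in> S l \<and> j \<notin> S l) * (a l)\<^sup>2)
      + 2 * (\<Sum>l\<in>J. of_bool (j \<in> S l \<and> i \<notin> S l) * (a l)\<^sup>2)"
    (is "_ \<le> 2 * ?h i j + 2 * ?h j i")
proof -
  let ?f = "step_fun J S a"
  have h_nonneg: "0 \<le> ?h i j" for i j
    by (intro sum_nonneg) auto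
  have h_sep: "?h i j = (?f i)\<^sup>2" if "\<forall>l\<in>J. i \<in> S l \<longrightarrow> j \<notin> S l" for i j
    unfolding step_fun_square[OF J disj] unfolding step_fun_def using that
    by (intro sum.cong) auto
  show ?thesis
  proof (cases "\<exists>l\<in>J. i \<in> S l \<and> j \<in> S l")
    case True
    then have "?f i = ?f j" using step_fun_eq[OF J disj] by metis
    then show ?thesis using h_nonneg[of i j] h_nonneg[of j i] by simp
  next
    case False
    then have "?h i j = (?f i)\<^sup>2" "?h j i = (?f j)\<^sup>2" by (auto intro!: h_sep)
    then show ?thesis
      using power2_diff[of "?f i" "?f j"] power2_sum[of "?f i" "?f j"] zero_le_power2[of "?f i + ?f j"]
      by linarith
  qed
qed

text \<open>The jump bound charges \<open>2 (a l)\<^sup>2\<close> to each orientation of an edge leaving \<open>S l\<close>, and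
  each block has exactly one such edge.\<close>

lemma step_fun_energy_le:
  fixes a :: "'j \<Rightarrow> real"
  assumes J: "finite J" and disj: "disjoint_family_on S J" and S: "\<forall>l\<in>J. S l \<subseteq> {..<n}"
    and boundary: "\<forall>l\<in>J. card (boundary_edges n E (S l)) = 1" and sym: "\<And>i j. E i j \<Longrightarrow> E j i"
  defines "f \<equiv> step_fun J S a"
  shows "(\<Sum>i<n. \<Sum>j<n. of_bool (E i j) * (f i - f j)\<^sup>2) \<le> 4 * (\<Sum>l\<in>J. (a l)\<^sup>2)"
proof -
  define h where "h i j = (\<Sum>l\<in>J. of_bool (i \<in> S l \<and> j \<notin> S l) * (a l)\<^sup>2)" for i j
  have jump: "(f i - f j)\<^sup>2 \<le> 2 * h i j + 2 * h j i" for i j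
    unfolding f_def h_def by (rule step_fun_jump_le[OF J disj])
  have edge_mass: "(\<Sum>i<n. \<Sum>j<n. of_bool (E i j) * h i j) = (\<Sum>l\<in>J. (a l)\<^sup>2)"
  proof -
    let ?b = "\<lambda>l i j. of_bool (E i j \<and> i \<in> S l \<and> j \<notin> S l) :: real"
    have "(\<Sum>i<n. \<Sum>j<n. of_bool (E i j) * h i j) = (\<Sum>i<n. \<Sum>j<n. \<Sum>l\<in>J. (a l)\<^sup>2 * ?b l i j)"
      unfolding h_def sum_distrib_left by (intro sum.cong refl) auto
    also have "\<dots> = (\<Sum>i<n. \<Sum>l\<in>J. \<Sum>j<n. (a l)\<^sup>2 * ?b l i j)"
      by (rule sum.cong[OF refl], rule sum.swap)
    also have "\<dots> = (\<Sum>l\<in>J. (a l)\<^sup>2 * (\<Sum>i<n. \<Sum>j<n. ?b l i j))"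
      by (subst sum.swap) (simp only: sum_distrib_left)
    also have "\<dots> = (\<Sum>l\<in>J. (a l)\<^sup>2)"
    proof (rule sum.cong)
      fix l assume "l \<in> J"
      then show "(a l)\<^sup>2 * (\<Sum>i<n. \<Sum>j<n. ?b l i j) = (a l)\<^sup>2"
        using sum_boundary_indicator[of "S l" n E] S boundary card_boundary_edges[of n E "S l"] by simp
    qed simp
    finally show ?thesis .
  qed
  have "(\<Sum>i<n. \<Sum>j<n. of_bool (E i j) * (f i - f j)\<^sup>2)
      \<le> (\<Sum>i<n. \<Sum>j<n. 2 * (of_bool (E i j) * h i j) + 2 * (of_bool (E j i) * h j i))"
    using jump sym by (intro sum_mono) (auto simp: algebra_simps)
  also have "\<dots> = 2 * (\<Sum>i<n. \<Sum>j<n. of_bool (E i j) * h i j) + 2 * (\<Sum>i<n. \<Sum>j<n. of_bool (E j i) * h j i)"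
    by (simp only: sum.distrib sum_distrib_left)
  also have "(\<Sum>i<n. \<Sum>j<n. of_bool (E j i) * h j i) = (\<Sum>i<n. \<Sum>j<n. of_bool (E i j) * h i j)"
    by (rule sum.swap)
  finally show ?thesis
    unfolding edge_mass by simp
qed

lemma step_fun_mass:
  fixes a :: "'j \<Rightarrow> real"
  assumes J: "finite J" and disj: "disjoint_family_on S J" and S: "\<forall>l\<in>J. S l \<subseteq> {..<n}"
  shows "(\<Sum>i<n. degree n E i * (step_fun J S a i)\<^sup>2) = (\<Sum>l\<in>J. (a l)\<^sup>2 * vol n E (S l))"
proof -
  have "(\<Sum>i<n. degree n E i * (step_fun J S a i)\<^sup>2)
      = (\<Sum>i<n. \<Sum>l\<in>J. if i \<in> S l then (a l)\<^sup>2 * degree n E i else 0)"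
    unfolding step_fun_square[OF J disj] unfolding step_fun_def sum_distrib_left
    by (intro sum.cong refl) (simp add: mult.commute)
  also have "\<dots> = (\<Sum>l\<in>J. \<Sum>i<n. if i \<in> S l then (a l)\<^sup>2 * degree n E i else 0)"
    by (rule sum.swap)
  also have "\<dots> = (\<Sum>l\<in>J. (a l)\<^sup>2 * vol n E (S l))"
  proof (rule sum.cong)
    fix l assume "l \<in> J"
    then have "{..<n} \<inter> S l = S l" using S by auto
    then show "(\<Sum>i<n. if i \<in> S l then (a l)\<^sup>2 * degree n E i else 0) = (a l)\<^sup>2 * vol n E (S l)"
      by (simp add: sum.inter_restrict[symmetric] vol_def sum_distrib_left)
  qed simp
  finally show ?thesis .
qed

lemma dangling_step_fun_rayleigh:
  fixes a :: "'j \<Rightarrow> real"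
  assumes G: "simple_graph n E" and deg: "\<And>i. i < n \<Longrightarrow> degree n E i > 0" and g: "g \<ge> 2"
    and J: "finite J" and dang: "\<forall>l\<in>J. dangling n E g (S l)" and disj: "disjoint_family_on S J"
    and a: "\<exists>l\<in>J. a l \<noteq> 0"
  defines "x \<equiv> vec n (\<lambda>i. sqrt (degree n E i) * step_fun J S a i)"
  shows "x \<bullet> (norm_laplacian n E *\<^sub>v x) < 1 / (real g - 1) * (x \<bullet> x)"
proof -
  define A where "A = (\<Sum>l\<in>J. (a l)\<^sup>2)"
  have S: "\<forall>l\<in>J. S l \<subseteq> {..<n}" and boundary: "\<forall>l\<in>J. card (boundary_edges n E (S l)) = 1"
    using dang unfolding dangling_def by auto
  have sym: "E i j \<Longrightarrow> E j i" for i j using G unfolding simple_graph_def by blast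
  obtain l where "l \<in> J" "a l \<noteq> 0" using a by blast
  then have "A > 0"
    unfolding A_def by (intro sum_pos2[OF J]) auto
  have "x \<bullet> (norm_laplacian n E *\<^sub>v x) \<le> 2 * A"
    using step_fun_energy_le[OF J disj S boundary sym, of a]
      norm_laplacian_quadratic_form(1)[OF G deg, of "step_fun J S a"]
    unfolding x_def A_def by simp
  also have "\<dots> < (2 * real g - 1) * A / (real g - 1)"
    using g \<open>A > 0\<close> by (simp add: field_simps)
  also have "\<dots> \<le> 1 / (real g - 1) * (x \<bullet> x)"
  proof -
    have "(2 * real g - 1) * A \<le> (\<Sum>l\<in>J. (a l)\<^sup>2 * vol n E (S l))"
      unfolding A_def sum_distrib_left
    proof (intro sum_mono)
      fix l assume "l \<in> J"
      then have "2 * real g - 1 \<le> vol n E (S l)"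
        using vol_dangling_ge[OF G] dang by blast
      then show "(2 * real g - 1) * (a l)\<^sup>2 \<le> (a l)\<^sup>2 * vol n E (S l)"
        using mult_right_mono[of "2 * real g - 1" "vol n E (S l)" "(a l)\<^sup>2"] by (simp add: mult.commute)
    qed
    then show ?thesis
      using g norm_laplacian_quadratic_form(2)[OF G deg, of "step_fun J S a"] step_fun_mass[OF J disj S, of E a]
      unfolding x_def by (simp add: divide_right_mono)
  qed
  finally show ?thesis .
qed

theorem theorem3p5:
  fixes n :: nat and E :: "nat \<Rightarrow> nat \<Rightarrow> bool" and g Q :: nat and S :: "nat \<Rightarrow> nat set"
  assumes graph: "simple_graph n E"
    and no_isolated: "\<forall>i<n. \<exists>j. E i j"
    and g: "g \<ge> 2" and Q: "Q \<ge> 1"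
    and dang: "\<forall>l\<in>{1..Q}. dangling n E g (S l)"
    and disj: "\<forall>l\<in>{1..Q}. \<forall>m\<in>{1..Q}. l \<noteq> m \<longrightarrow> S l \<inter> S m = {}"
    and vol0: "vol n E ({..<n} - (\<Union>l\<in>{1..Q}. S l)) \<ge> 4 * (real g)^2"
  shows "real (\<Sum>x\<in>{x. eigenvalue (norm_laplacian n E) x \<and> x < 1 / (real g - 1)}.
              order x (char_poly (norm_laplacian n E))) \<ge> real Q / 2"
proof -
  have deg: "degree n E i > 0" if "i < n" for i
    using degree_pos[OF graph] no_isolated that by blast
  have disj': "disjoint_family_on S {1..Q}"
    using disj unfolding disjoint_family_on_def by blast
  define U where "U l i = (if i \<in> S l then sqrt (degree n E i) else 0)" for l i
  have test_vec: "vec n (\<lambda>i. \<Sum>l\<in>{1..Q}. a l * U l i) = vec n (\<lambda>i. sqrt (degree n E i) * step_fun {1..Q} S a i)"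
    for a :: "nat \<Rightarrow> real"
    unfolding U_def step_fun_def sum_distrib_left by (intro arg_cong[where f = "vec n"] ext sum.cong) auto
  have "card {1..Q} \<le> eigenvalue_count (norm_laplacian n E) (1 / (real g - 1))"
    using dangling_step_fun_rayleigh[OF graph deg g _ dang disj']
    by (intro eigenvalue_count_ge_card[OF norm_laplacian_carrier transpose_norm_laplacian[OF graph],
          where U = U]) (simp_all only: test_vec finite_atLeastAtMost)
  then have "real Q \<le> real (eigenvalue_count (norm_laplacian n E) (1 / (real g - 1)))"
    by simp
  then show ?thesis
    unfolding eigenvalue_count_def by linarith
qed

end
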